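(* Assume inhibitory coupling ($\varepsilon_{ij}\le 0$ for all $i,j$ and $\varepsilon<0$); no assumption is made on the connectivity. Then for every ordering $\mathcal O$ and every $\boldsymbol\delta\in\mathbb R^N$, $$\max_i\big|(A(\mathcal O)\boldsymbol\delta)_i\big|\le\max_i|\delta_i|.$$ Consequently, for any sequence of orderings $\mathcal O_1,\mathcal O_2,\dots$, the iterates $\boldsymbol\delta(l)=A(\mathcal O_l)\boldsymbol\delta(l-1)$ satisfy $\|\boldsymbol\delta(l)\|_\infty\le\|\boldsymbol\delta(0)\|_\infty$ for all $l\in\mathbb N$.
   Context: Let $U$ be a twice continuously differentiable, strictly increasing function on an interval $I\subseteq\mathbb R$ containing $(-\infty,1]$. Assume $U'>0$ and $U''<0$ on $I$, $U(0)=0$ and $U(1)=1$. Fix $N\ge 2$ and a delay $\tau\in(0,1)$. For each $i$ fix a nonempty set $\mathrm{Pre}(i)\subseteq\{1,\dots,N\}\setminus\{i\}$ and put $k_i=|\mathrm{Pre}(i)|$. Fix real couplings $\varepsilon_{ij}$ with $\varepsilon_{ij}\neq0$ if and only if $j\in\mathrm{Pre}(i)$, normalized so that $\sum_j\varepsilon_{ij}=\varepsilon$ for every $i$. An ordering $\mathcal O$ is a choice, for each $i$, of an enumeration $j_1(i),\dots,j_{k_i}(i)$ of $\mathrm{Pre}(i)$. For $n\in\{0,\dots,k_i\}$ define $$p_{i,n}=\frac{U'\Big(U^{-1}\big(U(\tau)+\sum_{m=1}^{n}\varepsilon_{ij_m(i)}\big)\Big)}{U'\big(U^{-1}(U(\tau)+\varepsilon)\big)}.$$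 The stability matrix $A(\mathcal O)$ has entries - $A_{ii}=p_{i,0}$; - $A_{ij}=p_{i,n}-p_{i,n-1}$ if $j=j_n(i)$; - $A_{ij}=0$ if $j\notin\mathrm{Pre}(i)\cup\{i\}$. *)

theory Defs
  imports "HOL-Analysis.Analysis"
begin

definition admissible_U ::
  "real set \<Rightarrow> (real \<Rightarrow> real) \<Rightarrow> (real \<Rightarrow> real) \<Rightarrow> (real \<Rightarrow> real) \<Rightarrow> bool" where
  "admissible_U I U Up Upp \<longleftrightarrow>
     is_interval I \<and> {..1} \<subseteq> I \<and>
     (\<forall>x\<in>I. (U has_real_derivative Up x) (at x within I)) \<and>
     (\<forall>x\<in>I. (Up has_real_derivative Upp x) (at x within I)) \<and>
     continuous_on I Upp \<and>
     (\<forall>x\<in>I. Up x > 0) \<and> (\<forall>x\<in>I. Upp x < 0) \<and>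
     U 0 = 0 \<and> U 1 = 1"

definition is_ordering :: "('n \<Rightarrow> 'n set) \<Rightarrow> ('n \<Rightarrow> 'n list) \<Rightarrow> bool" where
  "is_ordering Pre ord \<longleftrightarrow> (\<forall>i. distinct (ord i) \<and> set (ord i) = Pre i)"

text \<open>p_{i,n}; the list is 0-indexed, so j_m(i) = ord i ! (m-1).\<close>
definition pcoef ::
  "real set \<Rightarrow> (real \<Rightarrow> real) \<Rightarrow> (real \<Rightarrow> real) \<Rightarrow> real \<Rightarrow> real \<Rightarrow>
   ('n \<Rightarrow> 'n \<Rightarrow> real) \<Rightarrow> ('n \<Rightarrow> 'n list) \<Rightarrow> 'n \<Rightarrow> nat \<Rightarrow> real" where
  "pcoef I U Up \<tau> \<epsilon> eps ord i n =
     Up (inv_into I U (U \<tau> + (\<Sum>m<n. eps i (ord i ! m))))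
     / Up (inv_into I U (U \<tau> + \<epsilon>))"

definition stab_matrix ::
  "real set \<Rightarrow> (real \<Rightarrow> real) \<Rightarrow> (real \<Rightarrow> real) \<Rightarrow> real \<Rightarrow> real \<Rightarrow>
   ('n::finite \<Rightarrow> 'n set) \<Rightarrow> ('n \<Rightarrow> 'n \<Rightarrow> real) \<Rightarrow> ('n \<Rightarrow> 'n list) \<Rightarrow> real^'n^'n" where
  "stab_matrix I U Up \<tau> \<epsilon> Pre eps ord =
     (\<chi> i j. if j = i then pcoef I U Up \<tau> \<epsilon> eps ord i 0
            else if j \<in> Pre i then
              (let n = (THE n. n < length (ord i) \<and> ord i ! n = j) in
                 pcoef I U Up \<tau> \<epsilon> eps ord i (Suc n) - pcoef I U Up \<tau> \<epsilon> eps ord i n)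
            else 0)"

definition supnorm :: "real^'n::finite \<Rightarrow> real" where
  "supnorm x = Max (range (\<lambda>i. \<bar>x $ i\<bar>))"

end

theory Submission
  imports Defs
begin

(* Under inhibitory coupling the stability matrix A(O) is a
   nonnegative matrix whose row sums are at most 1, and every such matrix is
   nonexpansive for the sup-norm; the statement about iterates then follows by
   induction.  Writing S_{i,n} for the n-th partial coupling sum along the
   enumeration of Pre(i), we have p_{i,n} = U'(g(U tau + S_{i,n})) / U'(g(U tau + eps))
   with g the inverse of U.  Since U is increasing and U' decreasing, the map
   y |-> U'(g y) is positive and antitone on (-oo,1]; inhibition makes S_{i,n}
   decrease from 0 to S_{i,k_i} >= eps, so 0 <= p_{i,0} <= ... <= p_{i,k_i} <= 1.
   The off-diagonal entries of row i are the increments of this sequence, so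
   they are nonnegative and the row sum telescopes to p_{i,k_i} <= 1.
   The file proves, in order: calculus facts on an interval, properties of U
   and its inverse, properties of the partial coupling sums, the shape of the
   rows of A(O), the sup-norm bound for nonnegative substochastic matrices,
   and finally the theorem. *)

lemma mvt_on_interval:
  fixes f f' :: "real \<Rightarrow> real"
  assumes I: "is_interval I"
    and deriv: "\<forall>x\<in>I. (f has_real_derivative f' x) (at x within I)"
    and ab: "a \<in> I" "b \<in> I" "a < b"
  shows "\<exists>c\<in>{a<..<b}. f b - f a = f' c * (b - a)"
proof -
  have sub: "{a..b} \<subseteq> I"
    using mem_is_interval_1_I[OF I ab(1,2)] by auto
  have "\<exists>x\<in>{a<..<b}. f b - f a = f' x * (b - a)"
  proof (rule mvt_simple[OF ab(3)])
    fix x assume "a \<le> x" "x \<le> b"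
    then have "x \<in> I" using sub by auto
    then have "(f has_derivative (*) (f' x)) (at x within I)"
      using deriv by (auto intro: has_field_derivative_imp_has_derivative)
    then show "(f has_derivative (*) (f' x)) (at x within {a..b})"
      using sub by (rule has_derivative_subset)
  qed
  then show ?thesis by auto
qed

lemma strict_mono_on_interval:
  fixes f f' :: "real \<Rightarrow> real"
  assumes I: "is_interval I"
    and deriv: "\<forall>x\<in>I. (f has_real_derivative f' x) (at x within I)"
    and pos: "\<forall>x\<in>I. f' x > 0"
    and ab: "a \<in> I" "b \<in> I" "a < b"
  shows "f a < f b"
proof -
  obtain c where c: "c \<in> {a<..<b}" "f b - f a = f' c * (b - a)"
    using mvt_on_interval[OF I deriv ab] by blast
  have "c \<in> I" using mem_is_interval_1_I[OF I ab(1,2), of c] c(1) by simp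
  then have "f' c * (b - a) > 0" using pos ab(3) by simp
  then show ?thesis using c(2) by simp
qed

lemma admissible_U_strict_mono:
  assumes "admissible_U I U Up Upp" "a \<in> I" "b \<in> I" "a < b"
  shows "U a < U b"
  using assms strict_mono_on_interval[of I U Up a b] unfolding admissible_U_def by blast

lemma admissible_U_deriv_antimono:
  assumes U: "admissible_U I U Up Upp" and ab: "a \<in> I" "b \<in> I" "a < b"
  shows "Up b < Up a"
proof -
  have "is_interval I" "\<forall>x\<in>I. ((\<lambda>x. - Up x) has_real_derivative - Upp x) (at x within I)"
    "\<forall>x\<in>I. - Upp x > 0"
    using U unfolding admissible_U_def by (auto intro: derivative_intros)
  from strict_mono_on_interval[OF this ab] show ?thesis by simp
qed

text \<open>Concavity gives the tangent bound U x \<le> U'(0) x for x < 0, so U is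
  unbounded below.\<close>
lemma admissible_U_tangent_bound:
  assumes U: "admissible_U I U Up Upp" and x: "x < 0"
  shows "U x \<le> Up 0 * x"
proof -
  have I: "is_interval I" and sub: "{..1} \<subseteq> I" and U0: "U 0 = 0"
    and dU: "\<forall>x\<in>I. (U has_real_derivative Up x) (at x within I)"
    using U unfolding admissible_U_def by auto
  have xI: "x \<in> I" and zI: "0 \<in> I" using sub x by auto
  obtain c where c: "c \<in> {x<..<0}" "U 0 - U x = Up c * (0 - x)"
    using mvt_on_interval[OF I dU xI zI x] by blast
  have "c \<in> I" using sub c(1) by auto
  then have "Up 0 < Up c"
    using admissible_U_deriv_antimono[OF U _ zI, of c] c(1) by auto
  then have "Up 0 * (0 - x) \<le> Up c * (0 - x)" using x by (intro mult_right_mono) auto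
  then show ?thesis using c(2) U0 by simp
qed

text \<open>Every y \<le> 1 is a value of U on I (by the tangent bound and the intermediate
  value theorem), so g = inv_into I U is a genuine right inverse of U on (-\<infinity>,1];
  this is what makes p_{i,n} meaningful.\<close>
lemma admissible_U_inverse:
  assumes U: "admissible_U I U Up Upp" and y: "y \<le> 1"
  shows "inv_into I U y \<in> I" "U (inv_into I U y) = y"
proof -
  have sub: "{..1} \<subseteq> I" and U0: "U 0 = 0" and U1: "U 1 = 1"
    and dU: "\<forall>x\<in>I. (U has_real_derivative Up x) (at x within I)"
    and Up_pos: "\<forall>x\<in>I. Up x > 0"
    using U unfolding admissible_U_def by auto
  have "0 \<in> I" using sub by auto
  then have up0: "Up 0 > 0" using Up_pos by blast
  define x0 where "x0 = min 0 (y / Up 0)"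
  have "U x0 \<le> y"
  proof (cases "y < 0")
    case True
    then have "x0 = y / Up 0" "y / Up 0 < 0"
      using up0 by (auto simp: x0_def divide_less_0_iff)
    then show ?thesis using admissible_U_tangent_bound[OF U, of "y / Up 0"] up0 by simp
  next
    case False
    then show ?thesis using up0 U0 by (simp add: x0_def)
  qed
  moreover have "continuous_on I U"
    unfolding continuous_on_eq_continuous_within using dU DERIV_continuous by blast
  then have "continuous_on {x0..1} U"
    by (rule continuous_on_subset) (use sub in \<open>auto simp: x0_def\<close>)
  moreover have "x0 \<le> 1" by (simp add: x0_def)
  ultimately obtain x where x: "x0 \<le> x" "x \<le> 1" "U x = y"
    using IVT'[of U x0 y 1] y U1 by auto
  have xI: "x \<in> I" using x(2) sub by auto
  have "y \<in> U ` I" using xI x(3) by blast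
  then show "inv_into I U y \<in> I" by (rule inv_into_into)
  from \<open>y \<in> U ` I\<close> show "U (inv_into I U y) = y" by (rule f_inv_into_f)
qed

lemma admissible_U_deriv_inverse_pos:
  assumes U: "admissible_U I U Up Upp" and y: "y \<le> 1"
  shows "Up (inv_into I U y) > 0"
  using U admissible_U_inverse(1)[OF U y] unfolding admissible_U_def by blast

lemma admissible_U_deriv_inverse_antimono:
  assumes U: "admissible_U I U Up Upp" and y: "y1 \<le> y2" "y2 \<le> 1"
  shows "Up (inv_into I U y2) \<le> Up (inv_into I U y1)"
proof -
  define x1 x2 where "x1 = inv_into I U y1" and "x2 = inv_into I U y2"
  have x: "x1 \<in> I" "U x1 = y1" "x2 \<in> I" "U x2 = y2"
    using admissible_U_inverse[OF U] y unfolding x1_def x2_def by auto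
  have "x1 \<le> x2"
  proof (rule ccontr)
    assume "\<not> x1 \<le> x2"
    then have "U x2 < U x1" using admissible_U_strict_mono[OF U x(3,1)] by simp
    then show False using x(2,4) y(1) by simp
  qed
  then have "Up x2 \<le> Up x1"
    using admissible_U_deriv_antimono[OF U x(1,3)] by (cases "x1 = x2") auto
  then show ?thesis unfolding x1_def x2_def .
qed

definition coupling_prefix :: "('n \<Rightarrow> 'n \<Rightarrow> real) \<Rightarrow> ('n \<Rightarrow> 'n list) \<Rightarrow> 'n \<Rightarrow> nat \<Rightarrow> real" where
  "coupling_prefix eps ord i n = (\<Sum>m<n. eps i (ord i ! m))"

lemma pcoef_eq_prefix:
  "pcoef I U Up \<tau> \<epsilon> eps ord i n =
     Up (inv_into I U (U \<tau> + coupling_prefix eps ord i n)) / Up (inv_into I U (U \<tau> + \<epsilon>))"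
  unfolding pcoef_def coupling_prefix_def ..

lemma coupling_prefix_inhibitory:
  assumes "\<And>j. eps i j \<le> 0"
  shows "coupling_prefix eps ord i n \<le> 0"
    and "coupling_prefix eps ord i (Suc n) \<le> coupling_prefix eps ord i n"
  using assms by (simp_all add: coupling_prefix_def sum_nonpos)

lemma coupling_prefix_ge_total:
  fixes eps :: "'n::finite \<Rightarrow> 'n \<Rightarrow> real"
  assumes inhib: "\<And>j. eps i j \<le> 0" and total: "(\<Sum>j\<in>UNIV. eps i j) = \<epsilon>"
    and dist: "distinct (ord i)" and n: "n \<le> length (ord i)"
  shows "\<epsilon> \<le> coupling_prefix eps ord i n"
proof -
  define B where "B = (!) (ord i) ` {..<n}"
  have "inj_on ((!) (ord i)) {..<n}"
    using dist n by (intro inj_onI) (auto simp: nth_eq_iff_index_eq)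
  then have "coupling_prefix eps ord i n = sum (eps i) B"
    unfolding coupling_prefix_def B_def by (simp add: sum.reindex)
  moreover have "\<epsilon> = sum (eps i) B + sum (eps i) (UNIV - B)"
    using total sum.subset_diff[of B UNIV "eps i"] by simp
  moreover have "sum (eps i) (UNIV - B) \<le> 0" using inhib by (simp add: sum_nonpos)
  ultimately show ?thesis by linarith
qed

lemma pcoef_inhibitory_bounds:
  fixes eps :: "'n::finite \<Rightarrow> 'n \<Rightarrow> real"
  assumes U: "admissible_U I U Up Upp" and tau: "\<tau> \<in> I" "\<tau> < 1"
    and inhib: "\<And>j. eps i j \<le> 0" "\<epsilon> < 0" and total: "(\<Sum>j\<in>UNIV. eps i j) = \<epsilon>"
    and dist: "distinct (ord i)"
  shows "0 \<le> pcoef I U Up \<tau> \<epsilon> eps ord i 0"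
    and "pcoef I U Up \<tau> \<epsilon> eps ord i n \<le> pcoef I U Up \<tau> \<epsilon> eps ord i (Suc n)"
    and "pcoef I U Up \<tau> \<epsilon> eps ord i (length (ord i)) \<le> 1"
proof -
  let ?S = "coupling_prefix eps ord i"
  let ?D = "Up (inv_into I U (U \<tau> + \<epsilon>))"
  have "1 \<in> I" "U 1 = 1" using U unfolding admissible_U_def by auto
  then have "U \<tau> < 1" using admissible_U_strict_mono[OF U tau(1), of 1] tau(2) by simp
  then have below: "U \<tau> + ?S m \<le> 1" for m
    using coupling_prefix_inhibitory(1)[where eps = eps and i = i and ord = ord and n = m, OF inhib(1)] by linarith
  have D: "?D > 0" using admissible_U_deriv_inverse_pos[OF U] \<open>U \<tau> < 1\<close> inhib(2) by simp
  show "0 \<le> pcoef I U Up \<tau> \<epsilon> eps ord i 0"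
    unfolding pcoef_eq_prefix
    using admissible_U_deriv_inverse_pos[OF U below] D by (simp add: less_imp_le)
  show "pcoef I U Up \<tau> \<epsilon> eps ord i n \<le> pcoef I U Up \<tau> \<epsilon> eps ord i (Suc n)"
    unfolding pcoef_eq_prefix using D
    by (intro divide_right_mono admissible_U_deriv_inverse_antimono[OF U _ below])
       (simp_all add: coupling_prefix_inhibitory(2)[where eps = eps and i = i, OF inhib(1)])
  have "?S (length (ord i)) \<ge> \<epsilon>"
    using coupling_prefix_ge_total[where eps = eps and i = i and ord = ord, OF inhib(1) total dist] by simp
  then have "Up (inv_into I U (U \<tau> + ?S (length (ord i)))) \<le> ?D"
    by (intro admissible_U_deriv_inverse_antimono[OF U _ below]) simp
  then show "pcoef I U Up \<tau> \<epsilon> eps ord i (length (ord i)) \<le> 1"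
    unfolding pcoef_eq_prefix using D by simp
qed

lemma stab_matrix_row_entry:
  assumes ord: "is_ordering Pre ord" and irrefl: "i \<notin> Pre i" and n: "n < length (ord i)"
  shows "stab_matrix I U Up \<tau> \<epsilon> Pre eps ord $ i $ (ord i ! n) =
           pcoef I U Up \<tau> \<epsilon> eps ord i (Suc n) - pcoef I U Up \<tau> \<epsilon> eps ord i n"
proof -
  have dist: "distinct (ord i)" and mem: "ord i ! n \<in> Pre i"
    using ord n unfolding is_ordering_def by (auto intro: nth_mem)
  have "(THE m. m < length (ord i) \<and> ord i ! m = ord i ! n) = n"
    using dist n by (intro the_equality) (auto simp: nth_eq_iff_index_eq)
  then show ?thesis
    using mem irrefl unfolding stab_matrix_def by (auto simp: Let_def)
qed

lemma stab_matrix_row_sum: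
  fixes Pre :: "'n::finite \<Rightarrow> 'n set"
  assumes ord: "is_ordering Pre ord" and irrefl: "i \<notin> Pre i"
  shows "(\<Sum>j\<in>UNIV. stab_matrix I U Up \<tau> \<epsilon> Pre eps ord $ i $ j) =
           pcoef I U Up \<tau> \<epsilon> eps ord i (length (ord i))"
proof -
  let ?A = "stab_matrix I U Up \<tau> \<epsilon> Pre eps ord"
  let ?p = "pcoef I U Up \<tau> \<epsilon> eps ord i"
  let ?k = "length (ord i)"
  have dist: "distinct (ord i)" and setL: "set (ord i) = Pre i"
    using ord unfolding is_ordering_def by auto
  have PreL: "Pre i = (!) (ord i) ` {..<?k}"
    unfolding setL[symmetric] by (auto simp: in_set_conv_nth)
  have inj: "inj_on ((!) (ord i)) {..<?k}"
    using dist by (intro inj_onI) (auto simp: nth_eq_iff_index_eq)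
  have outside: "?A $ i $ j = 0" if "j \<notin> insert i (Pre i)" for j
    using that unfolding stab_matrix_def by simp
  have "(\<Sum>j\<in>UNIV. ?A $ i $ j) = (\<Sum>j\<in>insert i (Pre i). ?A $ i $ j)"
    using outside by (intro sum.mono_neutral_right) auto
  also have "\<dots> = ?p 0 + (\<Sum>j\<in>Pre i. ?A $ i $ j)"
    using irrefl by (simp add: stab_matrix_def)
  also have "(\<Sum>j\<in>Pre i. ?A $ i $ j) = (\<Sum>n<?k. ?p (Suc n) - ?p n)"
    unfolding PreL sum.reindex[OF inj]
    by (intro sum.cong) (simp_all add: stab_matrix_row_entry[OF ord irrefl])
  also have "\<dots> = ?p ?k - ?p 0" by (rule sum_lessThan_telescope)
  finally show ?thesis by simp
qed

lemma stab_matrix_row_nonneg: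
  assumes ord: "is_ordering Pre ord" and irrefl: "i \<notin> Pre i"
    and p0: "0 \<le> pcoef I U Up \<tau> \<epsilon> eps ord i 0"
    and pinc: "\<And>n. pcoef I U Up \<tau> \<epsilon> eps ord i n \<le> pcoef I U Up \<tau> \<epsilon> eps ord i (Suc n)"
  shows "0 \<le> stab_matrix I U Up \<tau> \<epsilon> Pre eps ord $ i $ j"
proof (cases "j \<in> Pre i")
  case True
  have setL: "set (ord i) = Pre i" using ord unfolding is_ordering_def by simp
  obtain n where "n < length (ord i)" "j = ord i ! n"
    using True unfolding setL[symmetric] in_set_conv_nth by blast
  then show ?thesis using stab_matrix_row_entry[OF ord irrefl] pinc[of n] by simp
next
  case False
  then show ?thesis using p0 by (simp add: stab_matrix_def)
qed

lemma supnorm_substochastic: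
  fixes A :: "real^'n::finite^'m::finite" and x :: "real^'n"
  assumes nonneg: "\<And>i j. 0 \<le> A $ i $ j" and rows: "\<And>i. (\<Sum>j\<in>UNIV. A $ i $ j) \<le> 1"
  shows "supnorm (A *v x) \<le> supnorm x"
proof -
  define M where "M = supnorm x"
  have xM: "\<bar>x $ j\<bar> \<le> M" for j unfolding M_def supnorm_def by (rule Max_ge) auto
  then have M0: "0 \<le> M" by (meson abs_ge_zero order_trans)
  have "\<bar>(A *v x) $ i\<bar> \<le> M" for i
  proof -
    have "\<bar>(A *v x) $ i\<bar> = \<bar>\<Sum>j\<in>UNIV. A $ i $ j * x $ j\<bar>"
      by (simp add: matrix_vector_mult_def)
    also have "\<dots> \<le> (\<Sum>j\<in>UNIV. A $ i $ j * M)"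
      by (rule order_trans[OF sum_abs sum_mono])
         (simp add: abs_mult nonneg xM mult_left_mono)
    also have "\<dots> = (\<Sum>j\<in>UNIV. A $ i $ j) * M" by (simp add: sum_distrib_right)
    also have "\<dots> \<le> M" using mult_right_mono[OF rows M0] by simp
    finally show ?thesis .
  qed
  then show ?thesis unfolding M_def supnorm_def[of "A *v x"] by (intro Max.boundedI) auto
qed

theorem mainTheorem5:
  fixes I :: "real set" and U Up Upp :: "real \<Rightarrow> real"
    and \<tau> \<epsilon> :: real
    and Pre :: "'n::finite \<Rightarrow> 'n set" and eps :: "'n \<Rightarrow> 'n \<Rightarrow> real"
  assumes U: "admissible_U I U Up Upp"
    and N: "CARD('n) \<ge> 2"
    and tau: "0 < \<tau>" "\<tau> < 1"
    and Pre: "\<And>i. Pre i \<noteq> {}" "\<And>i. i \<notin> Pre i"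
    and eps_supp: "\<And>i j. eps i j \<noteq> 0 \<longleftrightarrow> j \<in> Pre i"
    and eps_sum: "\<And>i. (\<Sum>j\<in>UNIV. eps i j) = \<epsilon>"
    and inhib: "\<And>i j. eps i j \<le> 0" "\<epsilon> < 0"
  shows "(\<forall>ord (\<delta>::real^'n). is_ordering Pre ord \<longrightarrow>
            supnorm (stab_matrix I U Up \<tau> \<epsilon> Pre eps ord *v \<delta>) \<le> supnorm \<delta>)
      \<and> (\<forall>(Os :: nat \<Rightarrow> 'n \<Rightarrow> 'n list) (\<delta>s :: nat \<Rightarrow> real^'n).
            (\<forall>l. is_ordering Pre (Os l)) \<longrightarrow>
            (\<forall>l. \<delta>s (Suc l) = stab_matrix I U Up \<tau> \<epsilon> Pre eps (Os (Suc l)) *v \<delta>s l) \<longrightarrow>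
            (\<forall>l. supnorm (\<delta>s l) \<le> supnorm (\<delta>s 0)))"
proof -
  have tauI: "\<tau> \<in> I" using U tau unfolding admissible_U_def by auto
  have contraction: "supnorm (stab_matrix I U Up \<tau> \<epsilon> Pre eps ord *v \<delta>) \<le> supnorm \<delta>"
    if ord: "is_ordering Pre ord" for ord and \<delta> :: "real^'n"
  proof (rule supnorm_substochastic)
    fix i
    have dist: "distinct (ord i)" using ord unfolding is_ordering_def by simp
    note bounds = pcoef_inhibitory_bounds[where eps = eps and i = i and ord = ord, OF U tauI tau(2) inhib(1)[of i] inhib(2) eps_sum dist]
    show "0 \<le> stab_matrix I U Up \<tau> \<epsilon> Pre eps ord $ i $ j" for j
      using stab_matrix_row_nonneg[OF ord Pre(2) bounds(1,2)] .
    show "(\<Sum>j\<in>UNIV. stab_matrix I U Up \<tau> \<epsilon> Pre eps ord $ i $ j) \<le> 1"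
      using stab_matrix_row_sum[OF ord Pre(2)] bounds(3) by simp
  qed
  show ?thesis
  proof (intro conjI allI impI)
    fix Os :: "nat \<Rightarrow> 'n \<Rightarrow> 'n list" and \<delta>s :: "nat \<Rightarrow> real^'n" and l
    assume "\<forall>l. is_ordering Pre (Os l)"
      and "\<forall>l. \<delta>s (Suc l) = stab_matrix I U Up \<tau> \<epsilon> Pre eps (Os (Suc l)) *v \<delta>s l"
    then have step: "supnorm (\<delta>s (Suc m)) \<le> supnorm (\<delta>s m)" for m
      using contraction by simp
    show "supnorm (\<delta>s l) \<le> supnorm (\<delta>s 0)"
    proof (induction l)
      case (Suc l)
      then show ?case using step[of l] by linarith
    qed simp
  qed (use contraction in blast)
qed

end
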